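(* If a CFSTR contains a self-catalyzing reaction, then it fails the Jacobian Criterion. Conversely, if a CFSTR $\mathfrak{G}$ with non-flow subnetwork $G$ contains no self-catalyzing reaction, then $\mathfrak{G}$ passes the Jacobian Criterion if and only if every $k$-square embedded network of $G$ with $k\ge2$ has nonnegative orientation.
   Context: A chemical reaction network has species $X_1,\dots,X_s$ and reactions $y\to y'$ with $y,y'\in\mathbb{Z}_{\ge0}^s$, $y\ne y'$. Flow reactions are $0\to X_i$ and $X_i\to0$; others are non-flow. A CFSTR contains $X_i\to0$ for every species; its non-flow subnetwork consists of its non-flow reactions. A reaction $y\to y'$ is self-catalyzing if some species $X_j$ has $1\le y_j<y'_j$. For a list of $n$ reactions $y_k\to y'_k$ on $n$ species: reactant matrix $M$ (row $k$ is $y_k$), reaction matrix $R$ (row $k$ is $y_k-y'_k$), orientation $\operatorname{sign}(\det M\det R)$; empty network has orientation $+1$. A $k$-square embedded network of $G$ is given by $k$ species $S$ and $k$ non-flow reactions of $G$, restricted by deleting all species not in $S$ from both complexes (as a list). A CFSTR with $s$ species passes the Jacobian Criterion if every choice of $s$ distinct non-inflow reactions yields $s\times s$ reactant and reaction matrices (columns indexed by all species) with nonnegative orientation. *)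

theory Defs
  imports "Jordan_Normal_Form.Determinant"
begin

text \<open>Species are indexed by 0,...,s-1. A complex is a function nat => nat
  (vanishing outside 0..s-1); a reaction y -> y' is the pair (y, y').\<close>

type_synonym cplx = "nat \<Rightarrow> nat"
type_synonym reaction = "cplx \<times> cplx"

definition zero_cplx :: cplx where "zero_cplx = (\<lambda>_. 0)"

definition unit_cplx :: "nat \<Rightarrow> cplx" where
  "unit_cplx i = (\<lambda>j. if j = i then 1 else 0)"

definition valid_reaction :: "nat \<Rightarrow> reaction \<Rightarrow> bool" where
  "valid_reaction s r \<longleftrightarrow> fst r \<noteq> snd r \<and>
     (\<forall>j\<ge>s. fst r j = 0 \<and> snd r j = 0)"

definition network :: "nat \<Rightarrow> reaction set \<Rightarrow> bool" where
  "network s N \<longleftrightarrow> finite N \<and> (\<forall>r\<in>N. valid_reaction s r)"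

definition inflow :: "nat \<Rightarrow> reaction \<Rightarrow> bool" where
  "inflow s r \<longleftrightarrow> (\<exists>i<s. r = (zero_cplx, unit_cplx i))"

definition outflow :: "nat \<Rightarrow> reaction \<Rightarrow> bool" where
  "outflow s r \<longleftrightarrow> (\<exists>i<s. r = (unit_cplx i, zero_cplx))"

definition flow :: "nat \<Rightarrow> reaction \<Rightarrow> bool" where
  "flow s r \<longleftrightarrow> inflow s r \<or> outflow s r"

definition CFSTR :: "nat \<Rightarrow> reaction set \<Rightarrow> bool" where
  "CFSTR s N \<longleftrightarrow> network s N \<and> (\<forall>i<s. (unit_cplx i, zero_cplx) \<in> N)"

definition nonflow_subnetwork :: "nat \<Rightarrow> reaction set \<Rightarrow> reaction set" where
  "nonflow_subnetwork s N = {r \<in> N. \<not> flow s r}"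

definition self_catalyzing :: "nat \<Rightarrow> reaction \<Rightarrow> bool" where
  "self_catalyzing s r \<longleftrightarrow> (\<exists>j<s. 1 \<le> fst r j \<and> fst r j < snd r j)"

definition reactant_matrix :: "reaction list \<Rightarrow> int mat" where
  "reactant_matrix rs = mat (length rs) (length rs)
     (\<lambda>(k, j). int (fst (rs ! k) j))"

definition reaction_matrix :: "reaction list \<Rightarrow> int mat" where
  "reaction_matrix rs = mat (length rs) (length rs)
     (\<lambda>(k, j). int (fst (rs ! k) j) - int (snd (rs ! k) j))"

text \<open>Orientation; for the empty list both determinants are 1, giving +1.\<close>

definition orientation :: "reaction list \<Rightarrow> int" where
  "orientation rs = sgn (det (reactant_matrix rs) * det (reaction_matrix rs))"

definition passes_jacobian_criterion :: "nat \<Rightarrow> reaction set \<Rightarrow> bool" where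
  "passes_jacobian_criterion s N \<longleftrightarrow>
     (\<forall>rs. length rs = s \<and> distinct rs \<and> set rs \<subseteq> N \<and> (\<forall>r\<in>set rs. \<not> inflow s r)
        \<longrightarrow> orientation rs \<ge> 0)"

text \<open>Restriction of a complex to the species list sp (species sp!b becomes
  species b of the embedded network).\<close>

definition restrict_cplx :: "nat list \<Rightarrow> cplx \<Rightarrow> cplx" where
  "restrict_cplx sp y = (\<lambda>b. if b < length sp then y (sp ! b) else 0)"

definition restrict_reaction :: "nat list \<Rightarrow> reaction \<Rightarrow> reaction" where
  "restrict_reaction sp r = (restrict_cplx sp (fst r), restrict_cplx sp (snd r))"

definition square_embedded_network :: "nat \<Rightarrow> reaction set \<Rightarrow> nat \<Rightarrow> reaction list \<Rightarrow> bool" where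
  "square_embedded_network s G k E \<longleftrightarrow>
     (\<exists>sp rs. length sp = k \<and> distinct sp \<and> set sp \<subseteq> {..<s} \<and>
        length rs = k \<and> distinct rs \<and> set rs \<subseteq> G \<and>
        E = map (restrict_reaction sp) rs)"

end

theory Submission
  imports Defs
begin

(* All determinants are taken of matrices whose rows are reactions and whose
   columns are an arbitrary list of species; their signed product is the "sub-orientation".
   Three facts about it drive everything:
   (1) permuting the species columns does not change it (both determinants change by the
       same sign);
   (2) an outflow row X_c -> 0 is the unit row e_c in BOTH matrices, so Laplace expansion
       along it deletes that row and column c from both with the same cofactor sign;
   (3) an outflow row X_t -> 0 whose species t is not among the columns is a zero row.
   Hence a full Jacobian choice (s reactions, all species) has the orientation of its
   non-outflow part restricted to the species not "used up" by its outflows: either a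
   k-square embedded network (k >= 2), a 1x1 network of sign fst r j * (fst r j - snd r j),
   which is negative exactly for self-catalysis, or the empty network.  Conversely every
   embedded network, padded with the outflows of the missing species, is a Jacobian choice
   with the same orientation. *)

definition sub_reactant_matrix :: "reaction list \<Rightarrow> nat list \<Rightarrow> int mat" where
  "sub_reactant_matrix rs sp =
     mat (length rs) (length rs) (\<lambda>(k, b). int (fst (rs ! k) (sp ! b)))"

definition sub_reaction_matrix :: "reaction list \<Rightarrow> nat list \<Rightarrow> int mat" where
  "sub_reaction_matrix rs sp = mat (length rs) (length rs)
     (\<lambda>(k, b). int (fst (rs ! k) (sp ! b)) - int (snd (rs ! k) (sp ! b)))"

definition sub_orientation :: "reaction list \<Rightarrow> nat list \<Rightarrow> int" where
  "sub_orientation rs sp =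
     sgn (det (sub_reactant_matrix rs sp) * det (sub_reaction_matrix rs sp))"

definition outflow_reaction :: "nat \<Rightarrow> reaction" where
  "outflow_reaction i = (unit_cplx i, zero_cplx)"

definition delete_at :: "nat \<Rightarrow> 'a list \<Rightarrow> 'a list" where
  "delete_at k xs = take k xs @ drop (Suc k) xs"

lemma length_delete_at: "k < length xs \<Longrightarrow> length (delete_at k xs) = length xs - 1"
  unfolding delete_at_def by auto

lemma nth_delete_at:
  "k < length xs \<Longrightarrow> i < length xs - 1 \<Longrightarrow>
   delete_at k xs ! i = xs ! (if i < k then i else Suc i)"
  unfolding delete_at_def by (auto simp: nth_append min_def)

lemma distinct_delete_at: "distinct xs \<Longrightarrow> distinct (delete_at k xs)"
  unfolding delete_at_def using set_take_disj_set_drop_if_distinct[of xs k "Suc k"] by auto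

lemma set_delete_at: "set (delete_at k xs) \<subseteq> set xs"
  unfolding delete_at_def by (auto dest: in_set_takeD in_set_dropD)

lemma outflow_reaction_inj: "outflow_reaction i = outflow_reaction j \<longleftrightarrow> i = j"
proof
  assume "outflow_reaction i = outflow_reaction j"
  hence "unit_cplx i i = unit_cplx j i" by (simp add: outflow_reaction_def)
  thus "i = j" by (simp add: unit_cplx_def split: if_splits)
qed simp

lemma orientation_eq_sub_orientation: "orientation rs = sub_orientation rs [0..<length rs]"
  unfolding orientation_def sub_orientation_def reactant_matrix_def reaction_matrix_def
    sub_reactant_matrix_def sub_reaction_matrix_def
  by (intro arg_cong[where f=sgn] arg_cong2[where f="(*)"] arg_cong[where f=det] eq_matI) auto

lemma orientation_restrict_reactions:
  "length sp = length rs \<Longrightarrow>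
   orientation (map (restrict_reaction sp) rs) = sub_orientation rs sp"
  unfolding orientation_def sub_orientation_def reactant_matrix_def reaction_matrix_def
    sub_reactant_matrix_def sub_reaction_matrix_def restrict_reaction_def restrict_cplx_def
  by (intro arg_cong[where f=sgn] arg_cong2[where f="(*)"] arg_cong[where f=det] eq_matI) auto

section \<open>Fact (1): permuting the species\<close>

text \<open>Column version of the library's det_permute_rows, via transposition.\<close>

lemma det_permute_cols:
  assumes A: "(A :: 'a :: comm_ring_1 mat) \<in> carrier_mat n n" and p: "p permutes {0..<n}"
  shows "det (mat n n (\<lambda>(i, j). A $$ (i, p j))) = signof p * det A"
proof -
  have AT: "transpose_mat A \<in> carrier_mat n n" using A by auto
  have eq: "mat n n (\<lambda>(i, j). A $$ (i, p j)) =
     transpose_mat (mat n n (\<lambda>(i, j). transpose_mat A $$ (p i, j)))"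
    using A p by (intro eq_matI) (auto simp: permutes_in_image)
  have "det (mat n n (\<lambda>(i, j). A $$ (i, p j))) =
        det (mat n n (\<lambda>(i, j). transpose_mat A $$ (p i, j)))"
    unfolding eq by (rule det_transpose) auto
  also have "\<dots> = signof p * det (transpose_mat A)" by (rule det_permute_rows[OF AT p])
  also have "\<dots> = signof p * det A" using det_transpose[OF A] by simp
  finally show ?thesis .
qed

lemma sub_orientation_permute_species:
  assumes len: "length rs = n" "length sp = n" "length sp' = n"
    and p: "p permutes {0..<n}" and sp': "\<And>b. b < n \<Longrightarrow> sp' ! b = sp ! p b"
  shows "sub_orientation rs sp' = sub_orientation rs sp"
proof -
  have pin: "\<And>b. b < n \<Longrightarrow> p b < n" using p by (auto simp: permutes_in_image)
  have M: "sub_reactant_matrix rs sp' = mat n n (\<lambda>(i, j). sub_reactant_matrix rs sp $$ (i, p j))"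
    using len by (intro eq_matI) (auto simp: sub_reactant_matrix_def sp' pin)
  have R: "sub_reaction_matrix rs sp' = mat n n (\<lambda>(i, j). sub_reaction_matrix rs sp $$ (i, p j))"
    using len by (intro eq_matI) (auto simp: sub_reaction_matrix_def sp' pin)
  have carrier: "sub_reactant_matrix rs sp \<in> carrier_mat n n"
    "sub_reaction_matrix rs sp \<in> carrier_mat n n"
    using len by (simp_all add: sub_reactant_matrix_def sub_reaction_matrix_def)
  have sign_sq: "(signof p :: int) * signof p = 1" using signof_pm_one[of p] by auto
  have "det (sub_reactant_matrix rs sp') * det (sub_reaction_matrix rs sp') =
        (signof p * signof p) * (det (sub_reactant_matrix rs sp) * det (sub_reaction_matrix rs sp))"
    unfolding M R det_permute_cols[OF carrier(1) p] det_permute_cols[OF carrier(2) p]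
    by (simp add: ac_simps)
  thus ?thesis unfolding sub_orientation_def sign_sq by simp
qed

lemma sub_orientation_enumeration:
  assumes "distinct sp" "set sp = {..<length sp}" "length rs = length sp"
  shows "sub_orientation rs sp = sub_orientation rs [0..<length sp]"
proof -
  let ?n = "length sp"
  define p where "p = (\<lambda>b. if b < ?n then sp ! b else b)"
  have "bij_betw (\<lambda>b. sp ! b) {0..<?n} {0..<?n}"
    using assms by (metis atLeast0LessThan bij_betw_nth)
  hence "bij_betw p {0..<?n} {0..<?n}"
    by (rule bij_betw_cong[THEN iffD1, rotated]) (simp add: p_def)
  hence p: "p permutes {0..<?n}"
    by (rule bij_imp_permutes) (simp add: p_def)
  show ?thesis
    by (rule sub_orientation_permute_species[OF assms(3) _ _ p])
       (use assms nth_mem in \<open>fastforce simp: p_def\<close>)+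
qed

section \<open>Facts (2) and (3): outflow rows\<close>

text \<open>Laplace expansion along an outflow row whose species is a column: both determinants
  reduce to the same signed minor, so the row and the column may be deleted.\<close>

lemma sub_orientation_delete_outflow:
  assumes len: "length rs = n" "length sp = n" and dist: "distinct sp"
    and k: "k < n" and c: "c < n" and rk: "rs ! k = outflow_reaction (sp ! c)"
  shows "sub_orientation rs sp = sub_orientation (delete_at k rs) (delete_at c sp)"
proof -
  let ?M = "sub_reactant_matrix rs sp" and ?R = "sub_reaction_matrix rs sp"
  have unit_row: "?M $$ (k, b) = (if b = c then 1 else 0)" "?R $$ (k, b) = (if b = c then 1 else 0)"
    if "b < n" for b
    using that len k c rk dist
    by (auto simp: sub_reactant_matrix_def sub_reaction_matrix_def outflow_reaction_def
        unit_cplx_def zero_cplx_def nth_eq_iff_index_eq)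
  have carrier: "?M \<in> carrier_mat n n" "?R \<in> carrier_mat n n"
    using len by (simp_all add: sub_reactant_matrix_def sub_reaction_matrix_def)
  have dM: "det ?M = cofactor ?M k c"
    unfolding laplace_expansion_row[OF carrier(1) k]
    by (subst sum.cong[OF refl, where h="\<lambda>j. if j = c then cofactor ?M k j else 0"])
       (auto simp: unit_row c)
  have dR: "det ?R = cofactor ?R k c"
    unfolding laplace_expansion_row[OF carrier(2) k]
    by (subst sum.cong[OF refl, where h="\<lambda>j. if j = c then cofactor ?R k j else 0"])
       (auto simp: unit_row c)
  have len': "length (delete_at k rs) = n - 1" "length (delete_at c sp) = n - 1"
    using len k c by (auto simp: length_delete_at)
  have eM: "mat_delete ?M k c = sub_reactant_matrix (delete_at k rs) (delete_at c sp)"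
    using len k c len'
    by (intro eq_matI) (auto simp: mat_delete_def sub_reactant_matrix_def nth_delete_at)
  have eR: "mat_delete ?R k c = sub_reaction_matrix (delete_at k rs) (delete_at c sp)"
    using len k c len'
    by (intro eq_matI) (auto simp: mat_delete_def sub_reaction_matrix_def nth_delete_at)
  have sign_sq: "((-1::int) ^ (k + c)) * (-1) ^ (k + c) = 1"
    by (metis power_add[symmetric] mult_2[symmetric] power_mult power_minus1_even power_one)
  have "det ?M * det ?R = ((-1::int) ^ (k + c) * (-1) ^ (k + c)) *
     (det (sub_reactant_matrix (delete_at k rs) (delete_at c sp)) *
      det (sub_reaction_matrix (delete_at k rs) (delete_at c sp)))"
    unfolding dM dR cofactor_def eM eR by (simp add: ac_simps)
  thus ?thesis unfolding sub_orientation_def sign_sq by simp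
qed

lemma sub_orientation_outflow_missing_species:
  assumes len: "length rs = n" "length sp = n"
    and k: "k < n" and rk: "rs ! k = outflow_reaction t" and t: "t \<notin> set sp"
  shows "sub_orientation rs sp = 0"
proof -
  let ?M = "sub_reactant_matrix rs sp"
  have "?M = mat\<^sub>r n n (\<lambda>i. if i = k then 0\<^sub>v n else row ?M i)"
    using len k rk t
    by (intro eq_matI) (auto simp: sub_reactant_matrix_def outflow_reaction_def unit_cplx_def)
  moreover have "det (mat\<^sub>r n n (\<lambda>i. if i = k then 0\<^sub>v n else row ?M i)) = 0"
    by (rule det_row_0[OF k]) (use len in \<open>auto simp: sub_reactant_matrix_def\<close>)
  ultimately show ?thesis unfolding sub_orientation_def by simp
qed

text \<open>Iterating (2): appending the outflows of fresh species as new rows and columns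
  leaves the sub-orientation unchanged.\<close>

lemma sub_orientation_append_outflows:
  assumes "distinct (sp @ T)" "length rs = length sp"
  shows "sub_orientation (rs @ map outflow_reaction T) (sp @ T) = sub_orientation rs sp"
  using assms
proof (induction T rule: rev_induct)
  case Nil
  then show ?case by simp
next
  case (snoc t T)
  let ?rs = "rs @ map outflow_reaction T" and ?sp = "sp @ T"
  have "sub_orientation (?rs @ [outflow_reaction t]) (?sp @ [t]) =
        sub_orientation (delete_at (length ?sp) (?rs @ [outflow_reaction t]))
                        (delete_at (length ?sp) (?sp @ [t]))"
    by (rule sub_orientation_delete_outflow[where n="Suc (length ?sp)"])
       (use snoc.prems in \<open>auto simp: nth_append\<close>)
  also have "\<dots> = sub_orientation ?rs ?sp" using snoc.prems by (simp add: delete_at_def)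
  also have "\<dots> = sub_orientation rs sp" using snoc by simp
  finally show ?case by simp
qed

text \<open>The 1x1 case: this sign is negative exactly when the reaction is self-catalyzing in
  the chosen species.\<close>

lemma sub_orientation_single:
  "sub_orientation [r] [j] = sgn (int (fst r j) * (int (fst r j) - int (snd r j)))"
  unfolding sub_orientation_def
  by (simp add: det_single sub_reactant_matrix_def sub_reaction_matrix_def)

definition missing_species :: "nat \<Rightarrow> nat list \<Rightarrow> nat list" where
  "missing_species s sp = filter (\<lambda>i. i \<notin> set sp) [0..<s]"

lemma orientation_padded:
  assumes len: "length rs0 = length sp" and sp: "distinct sp" "set sp \<subseteq> {..<s}"
  defines "rs \<equiv> rs0 @ map outflow_reaction (missing_species s sp)"
  shows "length rs = s" "orientation rs = sub_orientation rs0 sp"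
proof -
  let ?T = "missing_species s sp"
  have d: "distinct (sp @ ?T)" and st: "set (sp @ ?T) = {..<s}"
    using sp by (auto simp: missing_species_def)
  have ls: "length (sp @ ?T) = s" using distinct_card[OF d] st by simp
  show l: "length rs = s" using ls len by (simp add: rs_def)
  have "orientation rs = sub_orientation rs [0..<s]"
    using orientation_eq_sub_orientation l by metis
  also have "\<dots> = sub_orientation rs (sp @ ?T)"
    using sub_orientation_enumeration[of "sp @ ?T" rs] d st ls l by simp
  also have "\<dots> = sub_orientation rs0 sp"
    unfolding rs_def by (rule sub_orientation_append_outflows[OF d len])
  finally show "orientation rs = sub_orientation rs0 sp" .
qed

lemma padded_is_jacobian_choice:
  assumes N: "CFSTR s N" and len: "length rs0 = length sp"
    and sp: "distinct sp" "set sp \<subseteq> {..<s}"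
    and rs0: "distinct rs0" "set rs0 \<subseteq> N" "\<forall>r\<in>set rs0. \<not> inflow s r"
    and no_out: "\<forall>r\<in>set rs0. \<forall>i<s. r \<noteq> outflow_reaction i"
  defines "rs \<equiv> rs0 @ map outflow_reaction (missing_species s sp)"
  shows "length rs = s \<and> distinct rs \<and> set rs \<subseteq> N \<and> (\<forall>r\<in>set rs. \<not> inflow s r)"
proof -
  have T: "set (missing_species s sp) \<subseteq> {..<s}" "distinct (missing_species s sp)"
    by (auto simp: missing_species_def)
  have out_in_N: "outflow_reaction i \<in> N" if "i < s" for i
    using N that unfolding CFSTR_def outflow_reaction_def by auto
  have out_not_inflow: "\<not> inflow s (outflow_reaction i)" for i
  proof
    assume "inflow s (outflow_reaction i)"
    hence "unit_cplx i i = zero_cplx i" by (auto simp: inflow_def outflow_reaction_def)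
    thus False by (simp add: unit_cplx_def zero_cplx_def)
  qed
  have outflows_distinct: "distinct (map outflow_reaction (missing_species s sp))"
    using T(2) by (simp add: distinct_map inj_on_def outflow_reaction_inj)
  have disjoint: "set rs0 \<inter> set (map outflow_reaction (missing_species s sp)) = {}"
    using no_out T(1) by auto
  have "set rs \<subseteq> N" using rs0(2) out_in_N T(1) by (auto simp: rs_def)
  moreover have "\<forall>r\<in>set rs. \<not> inflow s r" using rs0(3) out_not_inflow by (auto simp: rs_def)
  moreover have "distinct rs" using rs0(1) outflows_distinct disjoint by (simp add: rs_def)
  ultimately show ?thesis using orientation_padded(1)[OF len sp] by (simp add: rs_def)
qed

text \<open>Outflows
  are removed by (2) or give zero by (3); what remains is an embedded network or a single
  non-self-catalyzing reaction.\<close>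

lemma sub_orientation_nonneg:
  assumes H: "\<forall>k\<ge>2. \<forall>E. square_embedded_network s G k E \<longrightarrow> orientation E \<ge> 0"
    and no_sc: "\<forall>r\<in>G. \<not> self_catalyzing s r"
  shows "length rs = n \<Longrightarrow> length sp = n \<Longrightarrow> distinct sp \<Longrightarrow> set sp \<subseteq> {..<s} \<Longrightarrow>
    distinct rs \<Longrightarrow> \<forall>r\<in>set rs. (\<exists>i<s. r = outflow_reaction i) \<or> r \<in> G \<Longrightarrow>
    sub_orientation rs sp \<ge> 0"
proof (induction n arbitrary: rs sp)
  case 0
  then show ?case by (simp add: sub_orientation_def sub_reactant_matrix_def sub_reaction_matrix_def)
next
  case (Suc n)
  show ?case
  proof (cases "\<exists>k<Suc n. \<exists>i. rs ! k = outflow_reaction i")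
    case True
    then obtain k i where k: "k < Suc n" and rk: "rs ! k = outflow_reaction i" by blast
    show ?thesis
    proof (cases "i \<in> set sp")
      case True
      then obtain c where c: "c < Suc n" "sp ! c = i" using Suc.prems by (metis in_set_conv_nth)
      have "sub_orientation rs sp = sub_orientation (delete_at k rs) (delete_at c sp)"
        by (rule sub_orientation_delete_outflow[where n="Suc n"]) (use Suc.prems k c rk in auto)
      also have "\<dots> \<ge> 0"
      proof (rule Suc.IH)
        show "length (delete_at k rs) = n" "length (delete_at c sp) = n"
          using Suc.prems k c by (auto simp: length_delete_at)
        show "distinct (delete_at c sp)" "distinct (delete_at k rs)"
          using Suc.prems by (auto simp: distinct_delete_at)
        show "set (delete_at c sp) \<subseteq> {..<s}"
          using Suc.prems(4) set_delete_at[of c sp] by blast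
        show "\<forall>r\<in>set (delete_at k rs). (\<exists>i<s. r = outflow_reaction i) \<or> r \<in> G"
          using Suc.prems(6) set_delete_at[of k rs] by blast
      qed
      finally show ?thesis .
    next
      case False
      have "sub_orientation rs sp = 0"
        by (rule sub_orientation_outflow_missing_species[where n="Suc n"])
           (use Suc.prems k rk False in auto)
      thus ?thesis by simp
    qed
  next
    case False
    have in_G: "\<forall>r\<in>set rs. r \<in> G"
      using False Suc.prems(1,6) by (metis in_set_conv_nth)
    show ?thesis
    proof (cases "n = 0")
      case True
      obtain r j where rs: "rs = [r]" and sp: "sp = [j]"
        using Suc.prems(1,2) True by (auto simp: length_Suc_conv)
      have "j < s" "\<not> self_catalyzing s r" using Suc.prems sp no_sc in_G rs by auto
      hence "\<not> (1 \<le> fst r j \<and> fst r j < snd r j)" unfolding self_catalyzing_def by blast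
      hence "int (fst r j) * (int (fst r j) - int (snd r j)) \<ge> 0"
        by (cases "fst r j = 0") auto
      thus ?thesis unfolding rs sp sub_orientation_single by (simp add: sgn_if)
    next
      case False
      have "square_embedded_network s G (Suc n) (map (restrict_reaction sp) rs)"
        unfolding square_embedded_network_def using Suc.prems in_G by blast
      moreover have "Suc n \<ge> 2" using False by simp
      ultimately have "orientation (map (restrict_reaction sp) rs) \<ge> 0" using H by blast
      thus ?thesis using orientation_restrict_reactions Suc.prems by simp
    qed
  qed
qed

text \<open>A self-catalyzing reaction r in species j, padded with the outflows of all other
  species, is a Jacobian choice of negative orientation.\<close>

lemma self_catalyzing_fails_jacobian:
  assumes N: "CFSTR s N" and r: "r \<in> N" "self_catalyzing s r"
  shows "\<not> passes_jacobian_criterion s N"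
proof
  assume P: "passes_jacobian_criterion s N"
  from r obtain j where j: "j < s" and y: "1 \<le> fst r j" "fst r j < snd r j"
    unfolding self_catalyzing_def by blast
  let ?rs = "[r] @ map outflow_reaction (missing_species s [j])"
  have not_out: "\<forall>i<s. r \<noteq> outflow_reaction i"
    using y by (auto simp: outflow_reaction_def zero_cplx_def)
  have not_inflow: "\<not> inflow s r"
    using y unfolding inflow_def zero_cplx_def by auto
  have "length ?rs = s \<and> distinct ?rs \<and> set ?rs \<subseteq> N \<and> (\<forall>r\<in>set ?rs. \<not> inflow s r)"
    by (rule padded_is_jacobian_choice[OF N]) (use j r not_out not_inflow in auto)
  with P have "orientation ?rs \<ge> 0" unfolding passes_jacobian_criterion_def by blast
  moreover have "orientation ?rs = sub_orientation [r] [j]"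
    by (rule orientation_padded(2)) (use j in auto)
  moreover have "int (fst r j) * (int (fst r j) - int (snd r j)) < 0"
    using y by (intro mult_pos_neg) auto
  ultimately show False by (simp add: sub_orientation_single)
qed

text \<open>An embedded network of the non-flow subnetwork, padded with outflows, is a Jacobian
  choice with the same orientation.\<close>

lemma jacobian_imp_embedded_nonneg:
  assumes N: "CFSTR s N" and P: "passes_jacobian_criterion s N"
    and E: "square_embedded_network s (nonflow_subnetwork s N) k E"
  shows "orientation E \<ge> 0"
proof -
  obtain sp rs0 where sp: "length sp = k" "distinct sp" "set sp \<subseteq> {..<s}"
    and rs0: "length rs0 = k" "distinct rs0" "set rs0 \<subseteq> nonflow_subnetwork s N"
    and E_eq: "E = map (restrict_reaction sp) rs0"
    using E unfolding square_embedded_network_def by blast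
  let ?rs = "rs0 @ map outflow_reaction (missing_species s sp)"
  have nonflow: "\<forall>r\<in>set rs0. \<not> inflow s r \<and> (\<forall>i<s. r \<noteq> outflow_reaction i)"
    using rs0(3) by (auto simp: nonflow_subnetwork_def flow_def outflow_def outflow_reaction_def)
  have "length ?rs = s \<and> distinct ?rs \<and> set ?rs \<subseteq> N \<and> (\<forall>r\<in>set ?rs. \<not> inflow s r)"
    by (rule padded_is_jacobian_choice[OF N]) (use sp rs0 nonflow in \<open>auto simp: nonflow_subnetwork_def\<close>)
  with P have "orientation ?rs \<ge> 0" unfolding passes_jacobian_criterion_def by blast
  moreover have "orientation ?rs = sub_orientation rs0 sp"
    by (rule orientation_padded(2)) (use sp rs0 in auto)
  ultimately show ?thesis using E_eq orientation_restrict_reactions sp rs0 by simp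
qed

text \<open>Every non-inflow reaction of a CFSTR is an outflow or a non-flow reaction, so
  lemma sub_orientation_nonneg applies to every Jacobian choice.\<close>

lemma embedded_nonneg_imp_jacobian:
  assumes no_sc: "\<forall>r\<in>nonflow_subnetwork s N. \<not> self_catalyzing s r"
    and H: "\<forall>k\<ge>2. \<forall>E. square_embedded_network s (nonflow_subnetwork s N) k E
                 \<longrightarrow> orientation E \<ge> 0"
  shows "passes_jacobian_criterion s N"
  unfolding passes_jacobian_criterion_def
proof (intro allI impI)
  fix rs assume A: "length rs = s \<and> distinct rs \<and> set rs \<subseteq> N \<and> (\<forall>r\<in>set rs. \<not> inflow s r)"
  have "\<forall>r\<in>set rs. (\<exists>i<s. r = outflow_reaction i) \<or> r \<in> nonflow_subnetwork s N"
    using A by (auto simp: nonflow_subnetwork_def flow_def outflow_def outflow_reaction_def)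
  hence "sub_orientation rs [0..<s] \<ge> 0"
    using sub_orientation_nonneg[OF H no_sc] A by (auto simp: atLeast0LessThan)
  thus "orientation rs \<ge> 0" using orientation_eq_sub_orientation A by metis
qed

theorem mainTheorem4:
  fixes s :: nat and N :: "reaction set"
  assumes "CFSTR s N"
  shows "((\<exists>r\<in>N. self_catalyzing s r) \<longrightarrow> \<not> passes_jacobian_criterion s N) \<and>
         (\<not> (\<exists>r\<in>nonflow_subnetwork s N. self_catalyzing s r) \<longrightarrow>
           (passes_jacobian_criterion s N \<longleftrightarrow>
            (\<forall>k\<ge>2. \<forall>E. square_embedded_network s (nonflow_subnetwork s N) k E
                 \<longrightarrow> orientation E \<ge> 0)))"
  using self_catalyzing_fails_jacobian[OF assms] jacobian_imp_embedded_nonneg[OF assms]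
    embedded_nonneg_imp_jacobian
  by blast

end
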